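(* Let $w\in\mathcal{W}$ with $\Sigma_w$ positive definite, satisfying (C1) with parameter $\rho_w\ge1$: $\sqrt{w(\boldsymbol{X})}\|\Sigma_w^{-1/2}\boldsymbol{X}\|_2/\sqrt d\le\rho_w$ a.s., and (C2) with parameter $b_w\ge0$: $w(\boldsymbol{X})\|\Sigma_w^{-1/2}\mathrm{approx}_w(\boldsymbol{X})\boldsymbol{X}\|_2/\sqrt d\le b_w$ a.s. Let $\Delta=\Sigma_w^{-1/2}(\hat\Sigma_w-\Sigma_w)\Sigma_w^{-1/2}$ and pick any $t>0$. If $\|\Delta\|_2<1$, then $$\|\bar{\boldsymbol{\beta}}_w-\boldsymbol{\beta}_w\|_{\Sigma_w}\le\frac{1}{1-\|\Delta\|_2}\left\|\hat{\mathbb{E}}[w(\boldsymbol{X})\mathrm{approx}_w(\boldsymbol{X})\boldsymbol{X}]\right\|_{\Sigma_w^{-1}}.$$ Moreover, with probability at least $1-e^{-t}$, $$\left\|\hat{\mathbb{E}}[w(\boldsymbol{X})\mathrm{approx}_w(\boldsymbol{X})\boldsymbol{X}]\right\|_{\Sigma_w^{-1}}\le\sqrt{\frac{\mathbb{E}[\|\Sigma_w^{-1/2}w(\boldsymbol{X})\mathrm{approx}_w(\boldsymbol{X})\boldsymbol{X}\|_2^2]}{n}}(1+\sqrt{8t})+\frac{4b_wt\sqrt d}{3n}\le\sqrt{\frac{\rho_w^2d\,\mathbb{E}[w(\boldsymbol{X})\mathrm{approx}_w(\boldsymbol{X})^2]}{n}}(1+\sqrt{8t})+\frac{4b_wt\sqrt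 d}{3n}.$$
   Context: $\boldsymbol{X}\in\mathbb{R}^d$ features and $Y\in\mathbb{R}$ outcome with training distribution $P^{\text{tr}}$; $\mathcal{X}$ is the support of $\boldsymbol{X}$, $\mathbb{E}$ expectation under $P^{\text{tr}}$. We observe $n$ i.i.d. samples from $P^{\text{tr}}$, $\hat{\mathbb{E}}$ is the empirical average. $\mathcal{W}=\{w:\mathcal{X}\to\mathbb{R}^+\mid\mathbb{E}[w(\boldsymbol{X})]=1\}$. $\Sigma_w=\mathbb{E}[w(\boldsymbol{X})\boldsymbol{X}\boldsymbol{X}^T]$, $\boldsymbol{\beta}_w=\Sigma_w^{-1}\mathbb{E}[w(\boldsymbol{X})\boldsymbol{X}Y]$, $\hat\Sigma_w=\hat{\mathbb{E}}[w(\boldsymbol{X})\boldsymbol{X}\boldsymbol{X}^T]$, $\bar{\boldsymbol{\beta}}_w=\hat\Sigma_w^{-1}\hat{\mathbb{E}}[w(\boldsymbol{X})\boldsymbol{X}\,\mathbb{E}[Y\mid\boldsymbol{X}]]$. $\mathrm{approx}_w(\boldsymbol{X})=\mathbb{E}[Y\mid\boldsymbol{X}]-\langle\boldsymbol{\beta}_w,\boldsymbol{X}\rangle$. For a positive definite matrix $A$, $\|v\|_A=\sqrt{v^TAv}$; $\|\cdot\|_2$ on matrices is the spectral norm. *)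

theory Defs
  imports "HOL-Probability.Probability"
begin

definition outer :: "real^'d \<Rightarrow> real^'d^'d" where
  "outer x = (\<chi> i j. x $ i * x $ j)"

definition posdef :: "real^'d^'d \<Rightarrow> bool" where
  "posdef A \<longleftrightarrow> transpose A = A \<and> (\<forall>x. x \<noteq> 0 \<longrightarrow> 0 < x \<bullet> (A *v x))"

definition mat_sqrt :: "real^'d^'d \<Rightarrow> real^'d^'d" where
  "mat_sqrt A = (THE B. posdef B \<and> B ** B = A)"

definition mat_inv_sqrt :: "real^'d^'d \<Rightarrow> real^'d^'d" where
  "mat_inv_sqrt A = matrix_inv (mat_sqrt A)"

definition anorm :: "real^'d^'d \<Rightarrow> real^'d \<Rightarrow> real" where
  "anorm A v = sqrt (v \<bullet> (A *v v))"

definition spec_norm :: "real^'d^'d \<Rightarrow> real" where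
  "spec_norm A = onorm (\<lambda>x. A *v x)"

definition in_W :: "((real^'d) \<times> real) measure \<Rightarrow> (real^'d \<Rightarrow> real) \<Rightarrow> bool" where
  "in_W P w \<longleftrightarrow> w \<in> borel_measurable borel \<and> (\<forall>x. 0 \<le> w x) \<and>
     integrable P (\<lambda>z. w (fst z)) \<and> (LINT z|P. w (fst z)) = 1"

definition is_cond_exp_X :: "((real^'d) \<times> real) measure \<Rightarrow> (real^'d \<Rightarrow> real) \<Rightarrow> bool" where
  "is_cond_exp_X P m \<longleftrightarrow> m \<in> borel_measurable borel \<and> integrable P snd \<and>
     integrable P (\<lambda>z. m (fst z)) \<and>
     (\<forall>A\<in>sets borel. (LINT z|P. indicator A (fst z) * snd z) = (LINT z|P. indicator A (fst z) * m (fst z)))"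

definition Sigma_w :: "((real^'d) \<times> real) measure \<Rightarrow> (real^'d \<Rightarrow> real) \<Rightarrow> real^'d^'d" where
  "Sigma_w P w = (LINT z|P. w (fst z) *\<^sub>R outer (fst z))"

definition beta_w :: "((real^'d) \<times> real) measure \<Rightarrow> (real^'d \<Rightarrow> real) \<Rightarrow> real^'d" where
  "beta_w P w = matrix_inv (Sigma_w P w) *v (LINT z|P. (w (fst z) * snd z) *\<^sub>R fst z)"

text \<open>\<open>approx_w(x) = E[Y|X=x] - \<langle>\<beta>_w, x\<rangle>\<close>, with \<open>m\<close> the conditional expectation.\<close>
definition approx_w :: "((real^'d) \<times> real) measure \<Rightarrow> (real^'d \<Rightarrow> real) \<Rightarrow> (real^'d \<Rightarrow> real) \<Rightarrow> real^'d \<Rightarrow> real" where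
  "approx_w P w m x = m x - beta_w P w \<bullet> x"

definition emp :: "nat \<Rightarrow> (nat \<Rightarrow> (real^'d) \<times> real) \<Rightarrow> ((real^'d) \<times> real \<Rightarrow> 'b::real_vector) \<Rightarrow> 'b" where
  "emp n S f = (1 / real n) *\<^sub>R (\<Sum>i<n. f (S i))"

definition Sigma_hat :: "nat \<Rightarrow> (nat \<Rightarrow> (real^'d) \<times> real) \<Rightarrow> (real^'d \<Rightarrow> real) \<Rightarrow> real^'d^'d" where
  "Sigma_hat n S w = emp n S (\<lambda>z. w (fst z) *\<^sub>R outer (fst z))"

definition beta_bar :: "nat \<Rightarrow> (nat \<Rightarrow> (real^'d) \<times> real) \<Rightarrow> (real^'d \<Rightarrow> real) \<Rightarrow> (real^'d \<Rightarrow> real) \<Rightarrow> real^'d" where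
  "beta_bar n S w m = matrix_inv (Sigma_hat n S w) *v emp n S (\<lambda>z. (w (fst z) * m (fst z)) *\<^sub>R fst z)"

end

(*
  Write R for the inverse square root of Sigma_w. Since beta_w solves the normal equations,
  beta_bar_w - beta_w is the inverse of Sigma_hat_w applied to E_hat[w approx_w X], and
  R Sigma_hat_w R = I + Delta is bounded below by 1 - |Delta|; this gives the deterministic bound.

  The whitened errors Z = R w(X) approx_w(X) X are centred, because beta_w solves the population
  normal equations in which Y may be replaced by E[Y | X], and (C2) bounds them by b_w sqrt d.
  For every 1-Lipschitz F, the Doob martingale of F (Z_1 + ... + Z_n) has increments bounded
  by 2 b_w sqrt d with conditional variance at most 4 E |Z|^2, so Bernstein's estimate of the
  moment generating function applies step by step. For F = norm, the mean E |Z_1 + ... + Z_n|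
  is at most sqrt (n E |Z|^2), and a Chernoff bound gives the tail estimate. Finally (C1)
  bounds E |Z|^2 by rho_w^2 d E[w approx_w^2].
*)

theory Submission
  imports Defs
begin

section \<open>Bernstein's inequality for bounded random vectors\<close>

lemma two_mult_three_power_le_fact: "2 * 3 ^ k \<le> (fact (k + 2) :: real)"
proof (induction k)
  case (Suc k)
  have "2 * 3 ^ Suc k = 3 * (2 * 3 ^ k :: real)" by simp
  also have "\<dots> \<le> real (k + 3) * fact (k + 2)"
    using Suc by (intro mult_mono) auto
  also have "\<dots> = fact (Suc k + 2)" by (simp add: algebra_simps)
  finally show ?case .
qed simp

lemma exp_le_Bernstein:
  fixes u r :: real
  assumes u: "\<bar>u\<bar> \<le> r" and r: "r < 3"
  shows "exp u \<le> 1 + u + u\<^sup>2 / (2 * (1 - r / 3))"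
proof -
  have q: "0 \<le> r / 3" "r / 3 < 1" using u r by auto
  have geom: "summable (\<lambda>k. u\<^sup>2 / 2 * (r / 3) ^ k)"
    using q by (intro summable_mult summable_geometric) auto
  have term_le: "norm (inverse (fact (k + 2)) *\<^sub>R u ^ (k + 2)) \<le> u\<^sup>2 / 2 * (r / 3) ^ k" for k
  proof -
    have "norm (inverse (fact (k + 2)) *\<^sub>R u ^ (k + 2)) = u\<^sup>2 * \<bar>u\<bar> ^ k / fact (k + 2)"
      by (simp add: power_add power_abs abs_mult divide_inverse power2_eq_square)
    also have "\<dots> \<le> u\<^sup>2 * r ^ k / (2 * 3 ^ k)"
      using u two_mult_three_power_le_fact[of k] by (intro frac_le mult_left_mono power_mono) auto
    also have "\<dots> = u\<^sup>2 / 2 * (r / 3) ^ k" by (simp add: power_divide)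
    finally show ?thesis .
  qed
  have "(\<Sum>k. inverse (fact (k + 2)) *\<^sub>R u ^ (k + 2)) \<le> (\<Sum>k. u\<^sup>2 / 2 * (r / 3) ^ k)"
  proof (rule suminf_le[OF _ summable_comparison_test'[OF geom term_le] geom])
    show "inverse (fact (k + 2)) *\<^sub>R u ^ (k + 2) \<le> u\<^sup>2 / 2 * (r / 3) ^ k" for k
      using term_le[of k] by (metis abs_ge_self order_trans real_norm_def)
  qed
  also have "\<dots> = u\<^sup>2 / (2 * (1 - r / 3))"
    using suminf_mult[OF summable_geometric, of "r / 3" "u\<^sup>2 / 2"] suminf_geometric[of "r / 3"] q
    by simp
  finally show ?thesis using exp_first_two_terms[of u] by simp
qed

lemma (in prob_space) Bernstein_mgf_bound:
  fixes D :: "'a \<Rightarrow> real"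
  assumes D[measurable]: "D \<in> borel_measurable M"
    and bounded: "\<And>x. x \<in> space M \<Longrightarrow> \<bar>D x\<bar> \<le> c"
    and centred: "expectation D = 0"
    and variance: "expectation (\<lambda>x. (D x)\<^sup>2) \<le> v"
    and l: "0 \<le> l" "l * c < 3"
  shows "(\<integral>\<^sup>+x. exp (l * D x) \<partial>M) \<le> exp (l\<^sup>2 * v / (2 * (1 - l * c / 3)))"
proof -
  define k where "k = 2 * (1 - l * c / 3)"
  have k: "0 < k" using l by (simp add: k_def mult.commute)
  have int_D: "integrable M D"
    using bounded by (intro integrable_const_bound[where B=c]) auto
  have int_D2: "integrable M (\<lambda>x. (D x)\<^sup>2)"
    using bounded by (intro integrable_const_bound[where B="c\<^sup>2"])
      (auto intro!: AE_I2 simp: abs_le_square_iff[symmetric] intro: order_trans[OF _ abs_ge_self])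
  have int_exp: "integrable M (\<lambda>x. exp (l * D x))"
    using bounded l by (intro integrable_const_bound[where B="exp (l * c)"])
      (auto intro!: AE_I2 mult_left_mono dest: abs_le_D1)
  have pointwise: "exp (l * D x) \<le> 1 + l * D x + l\<^sup>2 / k * (D x)\<^sup>2" if "x \<in> space M" for x
  proof -
    have "\<bar>l * D x\<bar> \<le> l * c" using bounded[OF that] l by (simp add: abs_mult mult_left_mono)
    from exp_le_Bernstein[OF this l(2)] show ?thesis by (simp add: k_def power_mult_distrib)
  qed
  have "expectation (\<lambda>x. exp (l * D x)) \<le> expectation (\<lambda>x. 1 + l * D x + l\<^sup>2 / k * (D x)\<^sup>2)"
    using int_D int_D2 int_exp pointwise by (intro integral_mono) auto
  also have "\<dots> = 1 + l * expectation D + l\<^sup>2 / k * expectation (\<lambda>x. (D x)\<^sup>2)"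
    using int_D int_D2 by (simp add: prob_space)
  also have "\<dots> \<le> 1 + l\<^sup>2 * v / k"
    using centred variance k by (simp add: mult_left_mono divide_right_mono)
  also have "\<dots> \<le> exp (l\<^sup>2 * v / k)" by simp
  finally show ?thesis
    using int_exp by (simp add: nn_integral_eq_integral k_def)
qed

lemma Bernstein_exponent_choice:
  fixes S c t e l :: real
  assumes S: "S > 0" and c: "c > 0" and t: "t > 0"
    and e: "e = sqrt (2 * S * t) + 2 * c * t / 3"
    and l: "l = e / (S + c * e / 3)"
  shows "0 < l" "l * c < 3" "S * (l\<^sup>2 / (2 * (1 - l * c / 3))) - l * e \<le> - t"
proof -
  define D where "D = S + c * e / 3"
  define p where "p = sqrt (2 * S * t)"
  define q where "q = 2 * c * t / 3"
  have pq: "0 \<le> p" "0 < q" "e = p + q" using S c t e by (simp_all add: p_def q_def)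
  have D: "D > 0" using S c pq by (simp add: D_def add_pos_nonneg)
  have l_eq: "l = e / D" using l by (simp add: D_def)
  show "0 < l" using pq D l_eq by simp
  have lc: "l * c = c * e / D" using l_eq by simp
  show "l * c < 3" using lc D S by (simp add: D_def divide_less_eq)
  have "1 - l * c / 3 = S / D" using lc D by (simp add: D_def field_simps)
  then have "S * (l\<^sup>2 / (2 * (1 - l * c / 3))) = l\<^sup>2 * D / 2" using S D by simp
  moreover have "l\<^sup>2 * D / 2 - l * e = - (e\<^sup>2 / (2 * D))"
    using D unfolding l_eq by (simp add: field_simps power2_eq_square)
  ultimately have "S * (l\<^sup>2 / (2 * (1 - l * c / 3))) - l * e = - (e\<^sup>2 / (2 * D))" by linarith
  moreover have "t \<le> e\<^sup>2 / (2 * D)"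
  proof -
    have "2 * t * D = p\<^sup>2 + q * e" using S t by (simp add: D_def p_def q_def algebra_simps)
    also have "\<dots> \<le> e\<^sup>2" using pq by (simp add: power2_eq_square algebra_simps)
    finally show ?thesis using D by (simp add: field_simps)
  qed
  ultimately show "S * (l\<^sup>2 / (2 * (1 - l * c / 3))) - l * e \<le> - t" by linarith
qed

lemma borel_measurable_lipschitz:
  fixes F :: "'a::metric_space \<Rightarrow> 'b::metric_space"
  shows "L-lipschitz_on UNIV F \<Longrightarrow> F \<in> borel_measurable borel"
  by (intro borel_measurable_continuous_onI lipschitz_on_continuous_on)

lemma lipschitz_abs_le:
  fixes F :: "'a::real_normed_vector \<Rightarrow> real"
  assumes "1-lipschitz_on UNIV F"
  shows "\<bar>F a\<bar> \<le> \<bar>F 0\<bar> + norm a"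
  using lipschitz_on_normD[OF assms, of a 0] by simp

locale bounded_random_vector = prob_space M for M :: "'a measure" +
  fixes Z :: "'a \<Rightarrow> 'b::euclidean_space" and B :: real
  assumes measurable_Z[measurable]: "Z \<in> borel_measurable M"
    and norm_Z_le: "\<And>x. x \<in> space M \<Longrightarrow> norm (Z x) \<le> B"
begin

abbreviation sample :: "nat \<Rightarrow> (nat \<Rightarrow> 'a) measure" where
  "sample m \<equiv> PiM {..<m} (\<lambda>_. M)"

definition partial_sum :: "nat \<Rightarrow> (nat \<Rightarrow> 'a) \<Rightarrow> 'b" where
  "partial_sum m y = (\<Sum>j<m. Z (y j))"

definition sum_expectation :: "('b \<Rightarrow> real) \<Rightarrow> nat \<Rightarrow> real" where
  "sum_expectation F m = (\<integral>y. F (partial_sum m y) \<partial>sample m)"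

text \<open>\<open>shift_expectation F a\<close> is the conditional expectation of \<open>F\<close> at the next partial
  sum given that the current one is \<open>a\<close>; iterating it produces the Doob martingale of
  \<open>F (partial_sum n)\<close>.\<close>

definition shift_expectation :: "('b \<Rightarrow> real) \<Rightarrow> 'b \<Rightarrow> real" where
  "shift_expectation F a = expectation (\<lambda>x. F (a + Z x))"

definition mean_sq_norm :: real where
  "mean_sq_norm = expectation (\<lambda>x. (norm (Z x))\<^sup>2)"

lemma B_nonneg: "0 \<le> B"
  using norm_Z_le[of "SOME x. x \<in> space M"] not_empty some_in_eq
  by (metis norm_ge_zero order_trans)

lemma prob_space_sample: "prob_space (sample m)"
  by (intro prob_space_PiM prob_space_axioms)

lemma measurable_partial_sum[measurable]: "partial_sum m \<in> borel_measurable (sample m)"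
  unfolding partial_sum_def by measurable

lemma partial_sum_Suc: "partial_sum (Suc m) (y(m := x)) = partial_sum m y + Z x"
  unfolding partial_sum_def by (simp add: lessThan_Suc)

lemma norm_partial_sum_le:
  assumes "y \<in> space (sample m)"
  shows "norm (partial_sum m y) \<le> m * B"
proof -
  have "norm (partial_sum m y) \<le> (\<Sum>j<m. norm (Z (y j)))"
    unfolding partial_sum_def by (rule norm_sum)
  also have "\<dots> \<le> (\<Sum>j<m. B)"
    using assms by (intro sum_mono norm_Z_le) (auto simp: space_PiM)
  finally show ?thesis by simp
qed

lemma integrable_sample:
  fixes K :: real
  assumes [measurable]: "F \<in> borel_measurable borel"
    and bounded: "\<And>a. norm a \<le> m * B \<Longrightarrow> \<bar>F a\<bar> \<le> K"
  shows "integrable (sample m) (\<lambda>y. F (partial_sum m y))"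
proof -
  interpret sample: prob_space "sample m" by (rule prob_space_sample)
  show ?thesis
    by (intro sample.integrable_const_bound[where B=K]) (auto intro!: AE_I2 bounded norm_partial_sum_le)
qed

interpretation iid: product_prob_space "\<lambda>_::nat. M"
  by unfold_locales

lemma sum_expectation_Suc:
  fixes K :: real
  assumes [measurable]: "F \<in> borel_measurable borel"
    and bounded: "\<And>a. norm a \<le> Suc m * B \<Longrightarrow> \<bar>F a\<bar> \<le> K"
  shows "sum_expectation F (Suc m) = sum_expectation (shift_expectation F) m"
proof -
  have "integrable (sample (Suc m)) (\<lambda>y. F (partial_sum (Suc m) y))"
    by (rule integrable_sample[where K=K]) (use bounded in auto)
  then have int: "integrable (PiM (insert m {..<m}) (\<lambda>_. M)) (\<lambda>y. F (partial_sum (Suc m) y))"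
    by (simp add: lessThan_Suc)
  have "sum_expectation F (Suc m) = (\<integral>y. F (partial_sum (Suc m) y) \<partial>PiM (insert m {..<m}) (\<lambda>_. M))"
    unfolding sum_expectation_def by (simp add: lessThan_Suc)
  also have "\<dots> = (\<integral>y. (\<integral>x. F (partial_sum (Suc m) (y(m := x))) \<partial>M) \<partial>sample m)"
    using int by (intro iid.product_integral_insert) auto
  finally show ?thesis
    by (simp add: partial_sum_Suc sum_expectation_def shift_expectation_def)
qed

lemma nn_integral_sample_Suc:
  assumes [measurable]: "g \<in> borel_measurable borel"
  shows "(\<integral>\<^sup>+y. g (partial_sum (Suc m) y) \<partial>sample (Suc m))
    = (\<integral>\<^sup>+y. (\<integral>\<^sup>+x. g (partial_sum m y + Z x) \<partial>M) \<partial>sample m)"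
proof -
  have "(\<integral>\<^sup>+y. g (partial_sum (Suc m) y) \<partial>sample (Suc m))
      = (\<integral>\<^sup>+y. g (partial_sum (Suc m) y) \<partial>PiM (insert m {..<m}) (\<lambda>_. M))"
    by (simp add: lessThan_Suc)
  also have "\<dots> = (\<integral>\<^sup>+y. (\<integral>\<^sup>+x. g (partial_sum (Suc m) (y(m := x))) \<partial>M) \<partial>sample m)"
    using measurable_partial_sum[of "Suc m"]
    by (intro iid.product_nn_integral_insert) (auto simp: lessThan_Suc)
  finally show ?thesis by (simp add: partial_sum_Suc)
qed

lemma sum_expectation_0: "sum_expectation F 0 = F 0"
  using prob_space.prob_space[OF prob_space_sample, of 0]
  by (simp add: sum_expectation_def partial_sum_def)

lemma integrable_norm_Z: "integrable M (\<lambda>x. norm (Z x))"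
  by (intro integrable_const_bound[where B=B]) (auto intro!: AE_I2 norm_Z_le)

lemma integrable_norm_Z_sq: "integrable M (\<lambda>x. (norm (Z x))\<^sup>2)"
  by (intro integrable_const_bound[where B="B\<^sup>2"]) (auto intro!: AE_I2 power_mono norm_Z_le)

lemma mean_sq_norm_le: "mean_sq_norm \<le> B\<^sup>2"
  using integral_mono[OF integrable_norm_Z_sq, of "\<lambda>_. B\<^sup>2"] norm_Z_le
  by (simp add: mean_sq_norm_def prob_space power_mono)

lemma integrable_shift:
  fixes F :: "'b \<Rightarrow> real"
  assumes F: "1-lipschitz_on UNIV F"
  shows "integrable M (\<lambda>x. F (a + Z x))"
proof (rule integrable_const_bound[where B="\<bar>F 0\<bar> + norm a + B"])
  show "AE x in M. norm (F (a + Z x)) \<le> \<bar>F 0\<bar> + norm a + B"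
  proof (intro AE_I2)
    fix x assume "x \<in> space M"
    then have "norm (a + Z x) \<le> norm a + B"
      using norm_Z_le norm_triangle_ineq[of a "Z x"] by fastforce
    then show "norm (F (a + Z x)) \<le> \<bar>F 0\<bar> + norm a + B"
      using lipschitz_abs_le[OF F, of "a + Z x"] by simp
  qed
  show "(\<lambda>x. F (a + Z x)) \<in> borel_measurable M"
    using borel_measurable_lipschitz[OF F] by measurable
qed

lemma lipschitz_shift_expectation:
  fixes F :: "'b \<Rightarrow> real"
  assumes F: "1-lipschitz_on UNIV F"
  shows "1-lipschitz_on UNIV (shift_expectation F)"
proof (rule lipschitz_onI)
  fix a b :: 'b
  have "\<bar>shift_expectation F a - shift_expectation F b\<bar> = \<bar>expectation (\<lambda>x. F (a + Z x) - F (b + Z x))\<bar>"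
    unfolding shift_expectation_def using integrable_shift[OF F] by simp
  also have "\<dots> \<le> expectation (\<lambda>x. \<bar>F (a + Z x) - F (b + Z x)\<bar>)"
    by (rule integral_abs_bound)
  also have "\<dots> \<le> expectation (\<lambda>x. norm (a - b))"
  proof (intro integral_mono)
    show "\<bar>F (a + Z x) - F (b + Z x)\<bar> \<le> norm (a - b)" for x
      using lipschitz_on_normD[OF F, of "a + Z x" "b + Z x"] by simp
  qed (use integrable_shift[OF F] in auto)
  finally show "dist (shift_expectation F a) (shift_expectation F b) \<le> 1 * dist a b"
    by (simp add: prob_space dist_norm dist_real_def)
qed simp

text \<open>One step of the martingale argument: the increment is bounded by \<open>2 B\<close> and has
  variance at most \<open>4 E \<parallel>Z\<parallel>\<^sup>2\<close>.\<close>

lemma shift_deviation_mgf: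
  assumes F: "1-lipschitz_on UNIV F" and l: "0 \<le> l" "l * (2 * B) < 3"
  shows "(\<integral>\<^sup>+x. exp (l * (F (a + Z x) - shift_expectation F a)) \<partial>M)
           \<le> exp (l\<^sup>2 * (4 * mean_sq_norm) / (2 * (1 - l * (2 * B) / 3)))"
proof (rule Bernstein_mgf_bound)
  let ?D = "\<lambda>x. F (a + Z x) - shift_expectation F a"
  let ?\<mu> = "expectation (\<lambda>x. norm (Z x))"
  have int_F: "integrable M (\<lambda>x. F (a + Z x))" by (rule integrable_shift[OF F])
  have \<mu>_le: "?\<mu> \<le> B"
    using integral_mono[OF integrable_norm_Z, of "\<lambda>_. B"] norm_Z_le by (simp add: prob_space)
  have \<mu>_sq_le: "?\<mu>\<^sup>2 \<le> mean_sq_norm"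
    using variance_eq[OF integrable_norm_Z integrable_norm_Z_sq] variance_positive[of "\<lambda>x. norm (Z x)"]
    unfolding mean_sq_norm_def by simp
  show measurable_D: "?D \<in> borel_measurable M"
    using borel_measurable_lipschitz[OF F] by measurable
  have D_le: "\<bar>?D x\<bar> \<le> norm (Z x) + ?\<mu>" for x
  proof -
    have "?D x = expectation (\<lambda>x'. F (a + Z x) - F (a + Z x'))"
      using int_F by (simp add: shift_expectation_def prob_space)
    also have "\<bar>\<dots>\<bar> \<le> expectation (\<lambda>x'. \<bar>F (a + Z x) - F (a + Z x')\<bar>)"
      by (rule integral_abs_bound)
    also have "\<dots> \<le> expectation (\<lambda>x'. norm (Z x) + norm (Z x'))"
    proof (intro integral_mono)
      show "\<bar>F (a + Z x) - F (a + Z x')\<bar> \<le> norm (Z x) + norm (Z x')" for x'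
        using lipschitz_on_normD[OF F, of "a + Z x" "a + Z x'"] norm_triangle_ineq4[of "Z x" "Z x'"]
        by simp
    qed (use int_F integrable_norm_Z in auto)
    also have "\<dots> = norm (Z x) + ?\<mu>" using integrable_norm_Z by (simp add: prob_space)
    finally show ?thesis .
  qed
  show D_bounded: "\<bar>?D x\<bar> \<le> 2 * B" if "x \<in> space M" for x
    using D_le[of x] norm_Z_le[OF that] \<mu>_le by linarith
  show "expectation ?D = 0" using int_F by (simp add: shift_expectation_def prob_space)
  have "expectation (\<lambda>x. (?D x)\<^sup>2) \<le> expectation (\<lambda>x. (norm (Z x))\<^sup>2 + 2 * ?\<mu> * norm (Z x) + ?\<mu>\<^sup>2)"
  proof (intro integral_mono)
    have "(?D x)\<^sup>2 \<le> (2 * B)\<^sup>2" if "x \<in> space M" for x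
      using power_mono[OF D_bounded[OF that] abs_ge_zero, of 2] by simp
    then show "integrable M (\<lambda>x. (?D x)\<^sup>2)"
      using measurable_D by (intro integrable_const_bound[where B="(2 * B)\<^sup>2"]) (auto intro!: AE_I2)
    show "(?D x)\<^sup>2 \<le> (norm (Z x))\<^sup>2 + 2 * ?\<mu> * norm (Z x) + ?\<mu>\<^sup>2" for x
      using power_mono[OF D_le[of x] abs_ge_zero, of 2] by (simp add: power2_sum algebra_simps)
  qed (use integrable_norm_Z integrable_norm_Z_sq in auto)
  also have "\<dots> = mean_sq_norm + 3 * ?\<mu>\<^sup>2"
    using integrable_norm_Z integrable_norm_Z_sq
    by (simp add: power2_sum mean_sq_norm_def prob_space power2_eq_square)
  also have "\<dots> \<le> 4 * mean_sq_norm" using \<mu>_sq_le by simp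
  finally show "expectation (\<lambda>x. (?D x)\<^sup>2) \<le> 4 * mean_sq_norm" .
qed (use l in auto)

lemma deviation_mgf:
  assumes l: "0 \<le> l" "l * (2 * B) < 3" and F: "1-lipschitz_on UNIV F"
  shows "(\<integral>\<^sup>+y. exp (l * (F (partial_sum m y) - sum_expectation F m)) \<partial>sample m)
      \<le> exp (m * (l\<^sup>2 * (4 * mean_sq_norm) / (2 * (1 - l * (2 * B) / 3))))"
  using F
proof (induction m arbitrary: F)
  case 0
  interpret sample: prob_space "sample 0" by (rule prob_space_sample)
  show ?case using sample.emeasure_space_1 by (simp add: sum_expectation_0 partial_sum_def)
next
  case (Suc m)
  define \<phi> where "\<phi> = l\<^sup>2 * (4 * mean_sq_norm) / (2 * (1 - l * (2 * B) / 3))"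
  note F = Suc.prems
  note [measurable] = borel_measurable_lipschitz[OF F]
    borel_measurable_lipschitz[OF lipschitz_shift_expectation[OF F]]
  let ?c = "sum_expectation (shift_expectation F) m"
  have expectation_Suc: "sum_expectation F (Suc m) = ?c"
  proof (rule sum_expectation_Suc[where K="\<bar>F 0\<bar> + Suc m * B"])
    show "\<bar>F a\<bar> \<le> \<bar>F 0\<bar> + Suc m * B" if "norm a \<le> Suc m * B" for a
      using lipschitz_abs_le[OF F, of a] that by linarith
  qed measurable
  have "(\<integral>\<^sup>+y. exp (l * (F (partial_sum (Suc m) y) - sum_expectation F (Suc m))) \<partial>sample (Suc m))
      = (\<integral>\<^sup>+y. (\<integral>\<^sup>+x. exp (l * (F (partial_sum m y + Z x) - ?c)) \<partial>M) \<partial>sample m)"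
    unfolding expectation_Suc by (rule nn_integral_sample_Suc) measurable
  also have "\<dots> \<le> (\<integral>\<^sup>+y. ennreal (exp \<phi>) * exp (l * (shift_expectation F (partial_sum m y) - ?c)) \<partial>sample m)"
  proof (intro nn_integral_mono)
    fix y
    let ?a = "partial_sum m y"
    have "(\<integral>\<^sup>+x. exp (l * (F (?a + Z x) - ?c)) \<partial>M)
        = (\<integral>\<^sup>+x. exp (l * (F (?a + Z x) - shift_expectation F ?a)) \<partial>M)
            * exp (l * (shift_expectation F ?a - ?c))"
      by (subst nn_integral_multc[symmetric]) (auto intro!: nn_integral_cong
          simp: ennreal_mult'[symmetric] exp_add[symmetric] algebra_simps)
    also have "\<dots> \<le> ennreal (exp \<phi>) * exp (l * (shift_expectation F ?a - ?c))"
      using shift_deviation_mgf[OF F l, of ?a] unfolding \<phi>_def by (intro mult_right_mono) auto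
    finally show "(\<integral>\<^sup>+x. exp (l * (F (?a + Z x) - ?c)) \<partial>M)
        \<le> ennreal (exp \<phi>) * exp (l * (shift_expectation F ?a - ?c))" .
  qed
  also have "\<dots> = ennreal (exp \<phi>) * (\<integral>\<^sup>+y. exp (l * (shift_expectation F (partial_sum m y) - ?c)) \<partial>sample m)"
    by (rule nn_integral_cmult) measurable
  also have "\<dots> \<le> ennreal (exp \<phi>) * exp (m * \<phi>)"
    using Suc.IH[OF lipschitz_shift_expectation[OF F]] unfolding \<phi>_def by (intro mult_left_mono) auto
  also have "\<dots> = exp (Suc m * \<phi>)"
    by (simp add: ennreal_mult'[symmetric] exp_add[symmetric] algebra_simps)
  finally show ?case unfolding \<phi>_def .
qed

lemma sum_expectation_norm_sq:
  assumes centred: "integral\<^sup>L M Z = 0"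
  shows "sum_expectation (\<lambda>a. (norm (s + a))\<^sup>2) m = (norm s)\<^sup>2 + m * mean_sq_norm"
proof (induction m arbitrary: s)
  case 0
  show ?case by (simp add: sum_expectation_0)
next
  case (Suc m)
  have integrable_Z: "integrable M Z"
    by (intro integrable_const_bound[where B=B]) (auto intro!: AE_I2 norm_Z_le)
  have shift: "shift_expectation (\<lambda>a. (norm (s + a))\<^sup>2) = (\<lambda>p. (norm (s + p))\<^sup>2 + mean_sq_norm)"
  proof
    fix p
    have "(norm (s + (p + Z x)))\<^sup>2 = (norm (s + p))\<^sup>2 + 2 * ((s + p) \<bullet> Z x) + (norm (Z x))\<^sup>2" for x
      by (simp add: power2_norm_eq_inner inner_add_left inner_add_right inner_commute add.assoc)
    then show "shift_expectation (\<lambda>a. (norm (s + a))\<^sup>2) p = (norm (s + p))\<^sup>2 + mean_sq_norm"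
      using integrable_Z integrable_norm_Z_sq centred
      by (simp add: shift_expectation_def mean_sq_norm_def prob_space)
  qed
  have "sum_expectation (\<lambda>a. (norm (s + a))\<^sup>2) (Suc m)
      = sum_expectation (shift_expectation (\<lambda>a. (norm (s + a))\<^sup>2)) m"
  proof (rule sum_expectation_Suc[where K="(norm s + Suc m * B)\<^sup>2"])
    show "\<bar>(norm (s + a))\<^sup>2\<bar> \<le> (norm s + Suc m * B)\<^sup>2" if "norm a \<le> Suc m * B" for a
      using that norm_triangle_ineq[of s a] by (auto intro!: power_mono)
  qed measurable
  also have "\<dots> = sum_expectation (\<lambda>a. (norm (s + a))\<^sup>2) m + mean_sq_norm"
  proof -
    interpret sample: prob_space "sample m" by (rule prob_space_sample)
    have "integrable (sample m) (\<lambda>y. (norm (s + partial_sum m y))\<^sup>2)"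
    proof (rule integrable_sample[where K="(norm s + m * B)\<^sup>2"])
      show "\<bar>(norm (s + a))\<^sup>2\<bar> \<le> (norm s + m * B)\<^sup>2" if "norm a \<le> m * B" for a
        using that norm_triangle_ineq[of s a] by (auto intro!: power_mono)
    qed measurable
    then show ?thesis by (simp add: shift sum_expectation_def sample.prob_space)
  qed
  also have "\<dots> = (norm s)\<^sup>2 + Suc m * mean_sq_norm"
    using Suc.IH[of s] by (simp add: algebra_simps)
  finally show ?case .
qed

lemma sum_expectation_norm_le:
  assumes centred: "integral\<^sup>L M Z = 0"
  shows "sum_expectation norm m \<le> sqrt (m * mean_sq_norm)"
proof -
  interpret sample: prob_space "sample m" by (rule prob_space_sample)
  have int_norm: "integrable (sample m) (\<lambda>y. norm (partial_sum m y))"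
    by (rule integrable_sample[where K="m * B"]) auto
  have int_norm_sq: "integrable (sample m) (\<lambda>y. (norm (partial_sum m y))\<^sup>2)"
    by (rule integrable_sample[where K="(m * B)\<^sup>2" and F="\<lambda>a. (norm a)\<^sup>2"]) (auto intro!: power_mono)
  have "(sum_expectation norm m)\<^sup>2 \<le> sum_expectation (\<lambda>a. (norm (0 + a))\<^sup>2) m"
    using sample.variance_eq[OF int_norm int_norm_sq] sample.variance_positive[of "\<lambda>y. norm (partial_sum m y)"]
    unfolding sum_expectation_def by simp
  also have "\<dots> = m * mean_sq_norm"
    using sum_expectation_norm_sq[OF centred, of 0 m] by simp
  finally show ?thesis by (simp add: real_le_rsqrt)
qed

lemma prob_norm_partial_sum_deviation:
  assumes n: "n > 0" and t: "t > 0" and pos: "0 < mean_sq_norm"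
  shows "measure (sample n) {y \<in> space (sample n).
    sqrt (8 * real n * mean_sq_norm * t) + 4 * B * t / 3 \<le> norm (partial_sum n y) - sum_expectation norm n}
    \<le> exp (- t)"
proof -
  interpret sample: prob_space "sample n" by (rule prob_space_sample)
  have B_pos: "0 < B"
    using mean_sq_norm_le pos B_nonneg by (cases "B = 0") auto
  define S where "S = n * (4 * mean_sq_norm)"
  define e where "e = sqrt (2 * S * t) + 2 * (2 * B) * t / 3"
  define l where "l = e / (S + (2 * B) * e / 3)"
  have "0 < S" using n pos by (simp add: S_def)
  note l = Bernstein_exponent_choice[OF this _ t e_def l_def, simplified, OF B_pos]
  have "2 * S * t = 8 * real n * mean_sq_norm * t" by (simp add: S_def)
  then have e: "e = sqrt (8 * real n * mean_sq_norm * t) + 4 * B * t / 3" by (simp add: e_def)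
  let ?D = "\<lambda>y. norm (partial_sum n y) - sum_expectation norm n"
  have lipschitz_norm: "1-lipschitz_on UNIV (norm :: 'b \<Rightarrow> real)"
    by (intro lipschitz_onI) (auto simp: dist_norm norm_triangle_ineq3)
  have "(\<integral>\<^sup>+y. ennreal (exp (l * ?D y)) * indicator (space (sample n)) y \<partial>sample n)
      = (\<integral>\<^sup>+y. exp (l * ?D y) \<partial>sample n)"
    by (intro nn_integral_cong) simp
  also have "\<dots> \<le> exp (S * (l\<^sup>2 / (2 * (1 - l * (2 * B) / 3))))"
    using deviation_mgf[OF less_imp_le[OF l(1)] l(2) lipschitz_norm, of n]
    by (simp add: S_def algebra_simps)
  finally have mgf: "(\<integral>\<^sup>+y. ennreal (exp (l * ?D y)) * indicator (space (sample n)) y \<partial>sample n)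
      \<le> exp (S * (l\<^sup>2 / (2 * (1 - l * (2 * B) / 3))))" .
  have "emeasure (sample n) {y \<in> space (sample n). e \<le> ?D y}
      \<le> exp (- l * e) * (\<integral>\<^sup>+y. ennreal (exp (l * ?D y)) * indicator (space (sample n)) y \<partial>sample n)"
    using l(1) by (intro Chernoff_ineq_nn_integral_ge) auto
  also have "\<dots> \<le> ennreal (exp (- l * e)) * exp (S * (l\<^sup>2 / (2 * (1 - l * (2 * B) / 3))))"
    using mgf by (rule mult_left_mono) simp
  also have "\<dots> \<le> exp (- t)"
    using l(3) by (simp add: ennreal_mult'[symmetric] exp_add[symmetric])
  finally show ?thesis
    by (simp add: sample.emeasure_eq_measure e)
qed

lemma prob_norm_partial_sum_le:
  assumes centred: "integral\<^sup>L M Z = 0" and n: "n > 0" and t: "t > 0"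
  shows "1 - exp (- t) \<le> measure (sample n) {y \<in> space (sample n).
    norm (partial_sum n y) \<le> sqrt (n * mean_sq_norm) + sqrt (8 * n * mean_sq_norm * t) + 4 * B * t / 3}"
    (is "_ \<le> measure _ ?good")
proof -
  interpret sample: prob_space "sample n" by (rule prob_space_sample)
  have good_sets: "?good \<in> sets (sample n)" by measurable
  have mean_sq_nonneg: "0 \<le> mean_sq_norm" unfolding mean_sq_norm_def by simp
  show ?thesis
  proof (cases "mean_sq_norm = 0")
    case True
    then have "AE x in M. Z x = 0"
      using integral_nonneg_eq_0_iff_AE[OF integrable_norm_Z_sq] unfolding mean_sq_norm_def by simp
    then have "AE y in sample n. \<forall>j\<in>{..<n}. Z (y j) = 0"
      by (intro eventually_ball_finite ballI AE_PiM_component prob_space_axioms) auto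
    then have "AE y in sample n. norm (partial_sum n y)
        \<le> sqrt (n * mean_sq_norm) + sqrt (8 * n * mean_sq_norm * t) + 4 * B * t / 3"
      by eventually_elim (use B_nonneg t True in \<open>simp add: partial_sum_def\<close>)
    then have "measure (sample n) ?good = 1"
      using sample.prob_Collect_eq_1 good_sets by simp
    then show ?thesis by simp
  next
    case False
    let ?bad = "{y \<in> space (sample n).
      sqrt (8 * real n * mean_sq_norm * t) + 4 * B * t / 3 \<le> norm (partial_sum n y) - sum_expectation norm n}"
    have "space (sample n) - ?bad \<subseteq> ?good"
      using sum_expectation_norm_le[OF centred, of n] by auto
    then have "measure (sample n) (space (sample n) - ?bad) \<le> measure (sample n) ?good"
      by (rule sample.finite_measure_mono[OF _ good_sets])
    moreover have "measure (sample n) (space (sample n) - ?bad) = 1 - measure (sample n) ?bad"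
      by (rule sample.prob_compl) measurable
    moreover have "measure (sample n) ?bad \<le> exp (- t)"
      using False mean_sq_nonneg by (intro prob_norm_partial_sum_deviation[OF n t]) simp
    ultimately show ?thesis by linarith
  qed
qed

end

theorem (in prob_space) vector_Bernstein:
  fixes Z :: "'a \<Rightarrow> 'b::euclidean_space" and n :: nat
  assumes [measurable]: "Z \<in> borel_measurable M"
    and bounded: "AE x in M. norm (Z x) \<le> B" and B: "0 \<le> B"
    and centred: "integral\<^sup>L M Z = 0" and n: "n > 0" and t: "t > 0"
  shows "1 - exp (- t) \<le> measure (PiM {..<n} (\<lambda>_. M)) {y \<in> space (PiM {..<n} (\<lambda>_. M)).
    norm ((1 / n) *\<^sub>R (\<Sum>j<n. Z (y j)))
      \<le> sqrt (expectation (\<lambda>x. (norm (Z x))\<^sup>2) / n) * (1 + sqrt (8 * t)) + 4 * B * t / (3 * real n)}"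
    (is "_ \<le> measure ?\<Pi> ?good")
proof -
  interpret sample: prob_space ?\<Pi> by (intro prob_space_PiM prob_space_axioms)
  define Z' where "Z' = (\<lambda>x. if norm (Z x) \<le> B then Z x else 0)"
  interpret Z': bounded_random_vector M Z' B
  proof
    show "Z' \<in> borel_measurable M" unfolding Z'_def by measurable
  qed (simp add: Z'_def B)
  have AE_eq: "AE x in M. Z' x = Z x" using bounded by eventually_elim (simp add: Z'_def)
  have "integral\<^sup>L M Z' = 0"
    using integral_cong_AE[OF Z'.measurable_Z _ AE_eq] centred by simp
  note tail = Z'.prob_norm_partial_sum_le[OF this n t]
  define V where "V = expectation (\<lambda>x. (norm (Z x))\<^sup>2)"
  have V: "Z'.mean_sq_norm = V"
    unfolding Z'.mean_sq_norm_def V_def using AE_eq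
    by (intro integral_cong_AE) (auto simp: Z'_def elim: eventually_mono)
  define b where "b = sqrt (n * V) + sqrt (8 * n * V * t) + 4 * B * t / 3"
  have b: "b / n = sqrt (V / n) * (1 + sqrt (8 * t)) + 4 * B * t / (3 * real n)"
  proof -
    have "sqrt (8 * n * V * t) = sqrt (n * V) * sqrt (8 * t)"
      by (simp add: real_sqrt_mult[symmetric] algebra_simps)
    then have "b / n = sqrt (n * V) / n * (1 + sqrt (8 * t)) + 4 * B * t / (3 * real n)"
      using n by (simp add: b_def field_simps)
    moreover have "sqrt (n * V) / n = sqrt (V / n)"
      using n by (simp add: real_sqrt_mult real_sqrt_divide field_simps)
    ultimately show ?thesis by simp
  qed
  have "AE y in ?\<Pi>. \<forall>j\<in>{..<n}. Z' (y j) = Z (y j)"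
    using AE_eq by (intro eventually_ball_finite ballI AE_PiM_component prob_space_axioms) auto
  then have "AE y in ?\<Pi>. y \<in> {y \<in> space ?\<Pi>. norm (Z'.partial_sum n y) \<le> b} \<longrightarrow> y \<in> ?good"
  proof eventually_elim
    case (elim y)
    show ?case
    proof
      assume y: "y \<in> {y \<in> space ?\<Pi>. norm (Z'.partial_sum n y) \<le> b}"
      moreover have "Z'.partial_sum n y = (\<Sum>j<n. Z (y j))" using elim by (simp add: Z'.partial_sum_def)
      ultimately have "norm (\<Sum>j<n. Z (y j)) / n \<le> b / n" by (simp add: divide_right_mono)
      then show "y \<in> ?good" using y by (simp add: b V_def)
    qed
  qed
  then have "emeasure ?\<Pi> {y \<in> space ?\<Pi>. norm (Z'.partial_sum n y) \<le> b} \<le> emeasure ?\<Pi> ?good"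
    by (rule emeasure_mono_AE) measurable
  then show ?thesis
    using tail by (simp add: V b_def sample.emeasure_eq_measure)
qed

section \<open>Positive definite matrices and their square roots\<close>

lemma symmetric_matrix_inner:
  fixes A :: "real^'n^'n"
  assumes "transpose A = A"
  shows "(A *v x) \<bullet> y = x \<bullet> (A *v y)"
  by (metis assms dot_lmul_matrix transpose_matrix_vector)

text \<open>Moving from \<open>u\<close> in the direction \<open>A u - \<lambda> u\<close> would increase the Rayleigh quotient to
  first order, so at a maximiser this direction vanishes.\<close>

lemma Rayleigh_max_eigenvector:
  fixes A :: "real^'n^'n"
  assumes sym: "transpose A = A" and V: "subspace V" and invariant: "\<And>x. x \<in> V \<Longrightarrow> A *v x \<in> V"
    and u: "u \<in> V" "norm u = 1"
    and max: "\<And>y. y \<in> V \<Longrightarrow> y \<bullet> (A *v y) \<le> (u \<bullet> (A *v u)) * (norm y)\<^sup>2"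
  shows "A *v u = (u \<bullet> (A *v u)) *\<^sub>R u"
proof -
  let ?q = "\<lambda>y. y \<bullet> (A *v y)"
  define lam where "lam = ?q u"
  define w where "w = A *v u - lam *\<^sub>R u"
  have uu: "u \<bullet> u = 1" using u by (simp add: dot_square_norm)
  have wV: "w \<in> V" unfolding w_def using invariant u V by (simp add: subspace_diff subspace_scale)
  have wu: "w \<bullet> u = 0"
    unfolding w_def lam_def using uu by (simp add: inner_diff_left inner_diff_right inner_commute)
  have w_Au: "w \<bullet> (A *v u) = (norm w)\<^sup>2"
  proof -
    have "A *v u = w + lam *\<^sub>R u" by (simp add: w_def)
    then show ?thesis using wu by (simp add: inner_add_right power2_norm_eq_inner)
  qed
  have "w = 0"
  proof (rule ccontr)
    assume "w \<noteq> 0"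
    define a where "a = (norm w)\<^sup>2"
    define K where "K = lam * a - ?q w"
    define e where "e = a / (\<bar>K\<bar> + 1)"
    have a: "a > 0" using \<open>w \<noteq> 0\<close> by (simp add: a_def)
    have e: "e > 0" using a by (simp add: e_def)
    have "u \<bullet> (A *v w) = w \<bullet> (A *v u)"
      using symmetric_matrix_inner[OF sym, of u w] by (simp add: inner_commute)
    then have "?q (u + e *\<^sub>R w) = lam + 2 * e * a + e\<^sup>2 * ?q w"
      by (simp add: lam_def a_def w_Au matrix_vector_right_distrib matrix_vector_mult_scaleR
          inner_add_left inner_add_right power2_eq_square algebra_simps)
    moreover have "(norm (u + e *\<^sub>R w))\<^sup>2 = 1 + e\<^sup>2 * a"
      unfolding a_def power2_norm_eq_inner using uu wu
      by (simp add: inner_add_left inner_add_right inner_commute power2_eq_square algebra_simps)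
    moreover have "u + e *\<^sub>R w \<in> V" using u wV V by (simp add: subspace_add subspace_scale)
    ultimately have "2 * e * a \<le> e\<^sup>2 * K"
      using max[of "u + e *\<^sub>R w"] by (simp add: K_def lam_def algebra_simps)
    then have "2 * a \<le> e * K" using e by (simp add: power2_eq_square)
    also have "\<dots> \<le> e * \<bar>K\<bar>" using e by (intro mult_left_mono) auto
    also have "\<dots> < a" using a by (simp add: e_def field_simps)
    finally show False using a by simp
  qed
  then show ?thesis by (simp add: w_def lam_def)
qed

lemma symmetric_max_eigenvector:
  fixes A :: "real^'n^'n"
  assumes sym: "transpose A = A" and V: "subspace V" and invariant: "\<And>x. x \<in> V \<Longrightarrow> A *v x \<in> V"
    and nontrivial: "x0 \<in> V" "x0 \<noteq> 0"
  shows "\<exists>u\<in>V. norm u = 1 \<and> A *v u = (u \<bullet> (A *v u)) *\<^sub>R u"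
proof -
  let ?K = "sphere 0 1 \<inter> V"
  let ?q = "\<lambda>y. y \<bullet> (A *v y)"
  have "compact ?K" using closed_subspace[OF V] by (intro compact_Int_closed) auto
  moreover have "x0 /\<^sub>R norm x0 \<in> ?K" using nontrivial V by (auto simp: subspace_scale)
  then have "?K \<noteq> {}" by blast
  moreover have "continuous_on ?K ?q" by (intro continuous_intros)
  ultimately obtain u where "u \<in> ?K" and u_max: "\<And>y. y \<in> ?K \<Longrightarrow> ?q y \<le> ?q u"
    using continuous_attains_sup[of ?K ?q] by blast
  then have u: "u \<in> V" "norm u = 1" by auto
  have "?q y \<le> ?q u * (norm y)\<^sup>2" if "y \<in> V" for y
  proof (cases "y = 0")
    case False
    then have "y /\<^sub>R norm y \<in> ?K" using that V by (auto simp: subspace_scale)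
    then have "?q (y /\<^sub>R norm y) \<le> ?q u" by (rule u_max)
    moreover have "?q (y /\<^sub>R norm y) = ?q y / (norm y)\<^sup>2"
      by (simp add: matrix_vector_mult_scaleR power2_eq_square divide_inverse)
    ultimately have "?q y / (norm y)\<^sup>2 \<le> ?q u" by simp
    then show ?thesis using False by (simp add: divide_le_eq mult.commute)
  qed simp
  then show ?thesis using Rayleigh_max_eigenvector[OF sym V invariant u] u by blast
qed

lemma symmetric_eigenvector_orthogonal:
  fixes A :: "real^'n^'n"
  assumes sym: "transpose A = A" and eig: "A *v u = c *\<^sub>R u" and "x \<bullet> u = 0"
  shows "(A *v x) \<bullet> u = 0"
proof -
  have "(A *v x) \<bullet> u = x \<bullet> (A *v u)" by (rule symmetric_matrix_inner[OF sym])
  also have "\<dots> = c * (x \<bullet> u)" by (simp add: eig)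
  finally show ?thesis using assms(3) by simp
qed

lemma symmetric_orthonormal_eigenbasis:
  fixes A :: "real^'n^'n"
  assumes sym: "transpose A = A"
  shows "subspace V \<Longrightarrow> (\<And>x. x \<in> V \<Longrightarrow> A *v x \<in> V) \<Longrightarrow>
    \<exists>U. U \<subseteq> V \<and> pairwise orthogonal U \<and> V \<subseteq> span U \<and>
      (\<forall>u\<in>U. norm u = 1 \<and> A *v u = (u \<bullet> (A *v u)) *\<^sub>R u)"
proof (induction "dim V" arbitrary: V rule: less_induct)
  case less
  note V = less.prems(1) and invariant = less.prems(2)
  show ?case
  proof (cases "V \<subseteq> {0}")
    case True
    then show ?thesis by (intro exI[of _ "{}"]) auto
  next
    case False
    then obtain x0 where "x0 \<in> V" "x0 \<noteq> 0" by auto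
    then obtain u where u: "u \<in> V" "norm u = 1" and eig: "A *v u = (u \<bullet> (A *v u)) *\<^sub>R u"
      using symmetric_max_eigenvector[OF sym V invariant] by blast
    have uu: "u \<bullet> u = 1" using u by (simp add: dot_square_norm)
    define V' where "V' = {x \<in> V. x \<bullet> u = 0}"
    have V': "subspace V'"
      using V unfolding V'_def subspace_def by (auto simp: inner_add_left)
    have invariant': "A *v x \<in> V'" if "x \<in> V'" for x
      using that invariant symmetric_eigenvector_orthogonal[OF sym eig, of x] by (simp add: V'_def)
    have "u \<notin> V'" using uu by (simp add: V'_def)
    moreover have "V' \<subseteq> V" by (auto simp: V'_def)
    ultimately have "V' \<subset> V" using u(1) by blast
    then have "dim V' < dim V"
      using V V' by (metis dim_psubset span_eq_iff)
    from less.hyps[OF this V' invariant'] obtain U' where U':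
      "U' \<subseteq> V'" "pairwise orthogonal U'" "V' \<subseteq> span U'"
      "\<forall>u\<in>U'. norm u = 1 \<and> A *v u = (u \<bullet> (A *v u)) *\<^sub>R u" by blast
    show ?thesis
    proof (intro exI[of _ "insert u U'"] conjI)
      show "insert u U' \<subseteq> V" using U'(1) u by (auto simp: V'_def)
      show "pairwise orthogonal (insert u U')"
        using U'(1,2) by (auto simp: pairwise_insert V'_def orthogonal_def inner_commute)
      show "V \<subseteq> span (insert u U')"
      proof
        fix z assume "z \<in> V"
        then have "z - (z \<bullet> u) *\<^sub>R u \<in> V'"
          using u V uu by (simp add: V'_def subspace_diff subspace_scale inner_diff_left)
        then show "z \<in> span (insert u U')" using U'(3) by (auto simp: span_breakdown_eq)
      qed
      show "\<forall>v\<in>insert u U'. norm v = 1 \<and> A *v v = (v \<bullet> (A *v v)) *\<^sub>R v"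
        using U'(4) u eig by auto
    qed
  qed
qed

locale orthonormal_basis =
  fixes U :: "(real^'n) set"
  assumes finite_U: "finite U" and orthogonal_U: "pairwise orthogonal U"
    and norm_basis: "\<And>u. u \<in> U \<Longrightarrow> norm u = 1" and span_U: "span U = UNIV"
begin

definition basis_diag :: "(real^'n \<Rightarrow> real) \<Rightarrow> real^'n^'n" where
  "basis_diag g = (\<chi> i j. \<Sum>u\<in>U. g u * u$i * u$j)"

lemma inner_basis: "u \<in> U \<Longrightarrow> v \<in> U \<Longrightarrow> u \<bullet> v = (if u = v then 1 else 0)"
  using orthogonal_U norm_basis by (auto simp: pairwise_def orthogonal_def dot_square_norm)

lemma basis_expansion: "(\<Sum>u\<in>U. (u \<bullet> x) *\<^sub>R u) = x"
  using orthonormal_basis_expand[OF orthogonal_U norm_basis _ finite_U, of x] span_U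
  by (simp add: inner_commute)

lemma inner_basis_sum: "v \<in> U \<Longrightarrow> v \<bullet> (\<Sum>u\<in>U. c u *\<^sub>R u) = c v"
  using finite_U by (simp add: inner_sum_right inner_basis if_distrib[of "(*) _"] cong: if_cong)

lemma basis_diag_mult: "basis_diag g *v x = (\<Sum>u\<in>U. (g u * (u \<bullet> x)) *\<^sub>R u)"
proof -
  have "(basis_diag g *v x) $ i = (\<Sum>u\<in>U. \<Sum>j\<in>UNIV. g u * u$i * (u$j * x$j))" for i
    by (simp add: basis_diag_def matrix_vector_mult_def sum_distrib_right mult.assoc sum.swap[of _ UNIV])
  then show ?thesis
    by (simp add: vec_eq_iff inner_vec_def sum_distrib_left sum_component algebra_simps)
qed

lemma inner_basis_diag_mult: "v \<in> U \<Longrightarrow> v \<bullet> (basis_diag g *v x) = g v * (v \<bullet> x)"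
  by (simp add: basis_diag_mult inner_basis_sum)

lemma basis_diag_cong: "(\<And>u. u \<in> U \<Longrightarrow> f u = g u) \<Longrightarrow> basis_diag f = basis_diag g"
  unfolding basis_diag_def by (simp add: vec_eq_iff)

lemma basis_diag_mult_basis_diag: "basis_diag f ** basis_diag g = basis_diag (\<lambda>u. f u * g u)"
proof (rule matrix_eq[THEN iffD2, rule_format])
  fix x
  have "(basis_diag f ** basis_diag g) *v x = (\<Sum>u\<in>U. (f u * (g u * (u \<bullet> x))) *\<^sub>R u)"
    by (simp add: matrix_vector_mul_assoc[symmetric] basis_diag_mult[of f] inner_basis_diag_mult)
  then show "(basis_diag f ** basis_diag g) *v x = basis_diag (\<lambda>u. f u * g u) *v x"
    by (simp add: basis_diag_mult mult.assoc)
qed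

lemma transpose_basis_diag: "transpose (basis_diag g) = basis_diag g"
  by (simp add: basis_diag_def transpose_def vec_eq_iff mult.commute mult.left_commute)

lemma posdef_basis_diag:
  assumes "\<And>u. u \<in> U \<Longrightarrow> g u > 0"
  shows "posdef (basis_diag g)"
  unfolding posdef_def
proof (intro conjI allI impI transpose_basis_diag)
  fix x :: "real^'n" assume "x \<noteq> 0"
  then obtain v where v: "v \<in> U" "v \<bullet> x \<noteq> 0"
    using basis_expansion[of x] by (metis (no_types, lifting) scale_eq_0_iff sum.neutral)
  have "x \<bullet> (basis_diag g *v x) = (\<Sum>u\<in>U. g u * (u \<bullet> x)\<^sup>2)"
    by (simp add: basis_diag_mult inner_sum_right inner_commute power2_eq_square mult.assoc)
  also have "\<dots> > 0"
    using v assms finite_U by (intro sum_pos2[of U v]) (auto simp: less_imp_le)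
  finally show "0 < x \<bullet> (basis_diag g *v x)" .
qed

lemma eigen_basis_diag:
  assumes "\<And>u. u \<in> U \<Longrightarrow> A *v u = lam u *\<^sub>R u"
  shows "A = basis_diag lam"
proof (rule matrix_eq[THEN iffD2, rule_format])
  fix x
  have "A *v x = (\<Sum>u\<in>U. (u \<bullet> x) *\<^sub>R (A *v u))"
    by (subst (1) basis_expansion[symmetric, of x])
      (simp add: linear_sum[OF matrix_vector_mul_linear] matrix_vector_mult_scaleR)
  also have "\<dots> = basis_diag lam *v x"
    using assms by (simp add: basis_diag_mult mult.commute)
  finally show "A *v x = basis_diag lam *v x" .
qed

text \<open>A positive definite square root \<open>B\<close> of \<open>A\<close> acts on each eigenvector \<open>u\<close> of \<open>A\<close> as
  \<open>sqrt (lam u)\<close>: \<open>(B + sqrt (lam u)) (B - sqrt (lam u)) u = 0\<close> and \<open>B + sqrt (lam u)\<close> is injective.\<close>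

lemma posdef_sqrt_eq_basis_diag:
  assumes eigen: "\<And>u. u \<in> U \<Longrightarrow> A *v u = lam u *\<^sub>R u" and pos: "\<And>u. u \<in> U \<Longrightarrow> lam u > 0"
    and B: "posdef B" "B ** B = A"
  shows "B = basis_diag (\<lambda>u. sqrt (lam u))"
proof (rule eigen_basis_diag)
  fix u assume u: "u \<in> U"
  define s where "s = sqrt (lam u)"
  have s: "s > 0" "s * s = lam u" using pos[OF u] by (auto simp: s_def)
  define y where "y = B *v u - s *\<^sub>R u"
  have "B *v y + s *\<^sub>R y = (B ** B) *v u - (s * s) *\<^sub>R u"
    by (simp add: y_def matrix_vector_mult_diff_distrib matrix_vector_mult_scaleR
        matrix_vector_mul_assoc algebra_simps)
  also have "\<dots> = 0" using B(2) eigen[OF u] s by simp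
  finally have "y \<bullet> (B *v y) = - s * (y \<bullet> y)"
    by (simp add: eq_neg_iff_add_eq_0[symmetric])
  have "y = 0"
  proof (rule ccontr)
    assume "y \<noteq> 0"
    then have "0 < y \<bullet> (B *v y)" using B(1) by (simp add: posdef_def)
    moreover have "0 \<le> s * (y \<bullet> y)" using s by simp
    ultimately show False using \<open>y \<bullet> (B *v y) = - s * (y \<bullet> y)\<close> by simp
  qed
  then show "B *v u = sqrt (lam u) *\<^sub>R u" by (simp add: y_def s_def)
qed

lemma mat_sqrt_eq_basis_diag:
  assumes eigen: "\<And>u. u \<in> U \<Longrightarrow> A *v u = lam u *\<^sub>R u" and pos: "\<And>u. u \<in> U \<Longrightarrow> lam u > 0"
  shows "mat_sqrt A = basis_diag (\<lambda>u. sqrt (lam u))"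
  unfolding mat_sqrt_def
proof (rule the_equality)
  have "basis_diag (\<lambda>u. sqrt (lam u)) ** basis_diag (\<lambda>u. sqrt (lam u)) = basis_diag lam"
    using pos by (simp add: basis_diag_mult_basis_diag less_imp_le cong: basis_diag_cong)
  then show "posdef (basis_diag (\<lambda>u. sqrt (lam u))) \<and>
      basis_diag (\<lambda>u. sqrt (lam u)) ** basis_diag (\<lambda>u. sqrt (lam u)) = A"
    using pos eigen_basis_diag[OF eigen] by (auto intro!: posdef_basis_diag)
qed (use posdef_sqrt_eq_basis_diag[OF eigen pos] in blast)

end

lemma posdef_orthonormal_eigenbasis:
  fixes A :: "real^'n^'n"
  assumes A: "posdef A"
  obtains U lam where "orthonormal_basis U" "\<And>u. u \<in> U \<Longrightarrow> A *v u = lam u *\<^sub>R u" "\<And>u. u \<in> U \<Longrightarrow> lam u > 0"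
proof -
  have sym: "transpose A = A" using A by (simp add: posdef_def)
  obtain U where U: "pairwise orthogonal U" "UNIV \<subseteq> span U"
      "\<forall>u\<in>U. norm u = 1 \<and> A *v u = (u \<bullet> (A *v u)) *\<^sub>R u"
    using symmetric_orthonormal_eigenbasis[OF sym, of UNIV] by auto
  have "orthonormal_basis U"
    using U pairwise_orthogonal_imp_finite[OF U(1)] by unfold_locales auto
  moreover have "u \<bullet> (A *v u) > 0" if "u \<in> U" for u
    using A U(3) that unfolding posdef_def by (metis norm_zero zero_neq_one)
  ultimately show ?thesis using U(3) by (intro that[of U "\<lambda>u. u \<bullet> (A *v u)"]) auto
qed

lemma posdef_mat_sqrt:
  fixes A :: "real^'n^'n"
  assumes "posdef A"
  shows "posdef (mat_sqrt A)" "mat_sqrt A ** mat_sqrt A = A"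
proof -
  obtain U lam where "orthonormal_basis U" and eigen: "\<And>u. u \<in> U \<Longrightarrow> A *v u = lam u *\<^sub>R u"
    and pos: "\<And>u. u \<in> U \<Longrightarrow> lam u > 0"
    using posdef_orthonormal_eigenbasis[OF assms] by blast
  interpret orthonormal_basis U by fact
  show "posdef (mat_sqrt A)"
    using pos by (simp add: mat_sqrt_eq_basis_diag[OF eigen pos] posdef_basis_diag)
  have "mat_sqrt A ** mat_sqrt A = basis_diag lam"
    using pos by (simp add: mat_sqrt_eq_basis_diag[OF eigen pos] basis_diag_mult_basis_diag less_imp_le
        cong: basis_diag_cong)
  then show "mat_sqrt A ** mat_sqrt A = A" using eigen_basis_diag[OF eigen] by simp
qed

lemma matrix_inv_invertible:
  fixes A :: "'a::semiring_1^'n^'n"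
  assumes "invertible A"
  shows "A ** matrix_inv A = mat 1" "matrix_inv A ** A = mat 1"
  using someI_ex[OF assms[unfolded invertible_def]] by (simp_all add: matrix_inv_def)

lemma matrix_inv_unique:
  fixes A B :: "'a::field^'n^'n"
  assumes "A ** B = mat 1"
  shows "matrix_inv A = B"
proof -
  have BA: "B ** A = mat 1" using assms matrix_left_right_inverse by blast
  then have "invertible A" using assms by (auto simp: invertible_def)
  then have "matrix_inv A = matrix_inv A ** (A ** B)" using assms by simp
  also have "\<dots> = B"
    using matrix_inv_invertible[OF \<open>invertible A\<close>] by (simp add: matrix_mul_assoc)
  finally show ?thesis .
qed

lemma posdef_invertible:
  fixes A :: "real^'n^'n"
  assumes "posdef A"
  shows "invertible A"
proof -
  have "x = 0" if "A *v x = 0" for x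
    using assms that by (auto simp: posdef_def)
  then show ?thesis by (simp add: invertible_left_inverse matrix_left_invertible_ker)
qed

lemma anorm_square:
  fixes Q :: "real^'n^'n"
  assumes "transpose Q = Q"
  shows "anorm (Q ** Q) v = norm (Q *v v)"
  using symmetric_matrix_inner[OF assms, of v "Q *v v"]
  by (simp add: anorm_def norm_eq_sqrt_inner matrix_vector_mul_assoc[symmetric])

lemma mat_inv_sqrt_whitening:
  fixes A :: "real^'n^'n"
  assumes A: "posdef A"
  defines "Q \<equiv> mat_sqrt A" and "R \<equiv> mat_inv_sqrt A"
  shows "R ** Q = mat 1" "R ** A ** R = mat 1" "matrix_inv A = R ** R" "transpose R = R"
proof -
  have Q: "posdef Q" "Q ** Q = A" unfolding Q_def by (rule posdef_mat_sqrt[OF A])+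
  have R: "Q ** R = mat 1" "R ** Q = mat 1"
    using matrix_inv_invertible[OF posdef_invertible[OF Q(1)]] by (simp_all add: R_def Q_def mat_inv_sqrt_def)
  then show "R ** Q = mat 1" by simp
  show "R ** A ** R = mat 1"
    using R by (simp flip: Q(2) add: matrix_mul_assoc)
  have "A ** (R ** R) = Q ** (Q ** R) ** R" by (simp flip: Q(2) add: matrix_mul_assoc)
  also have "\<dots> = mat 1" using R by simp
  finally show "matrix_inv A = R ** R" by (rule matrix_inv_unique)
  have "transpose Q = Q" using Q(1) by (simp add: posdef_def)
  then have "Q ** transpose R = mat 1"
    using R(2) by (metis matrix_transpose_mul transpose_mat)
  then show "transpose R = R"
    unfolding R_def mat_inv_sqrt_def Q_def[symmetric] by (rule matrix_inv_unique[symmetric])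
qed

lemma perturbed_inverse_bound:
  fixes Sig H R Q :: "real^'n^'n"
  assumes RQ: "R ** Q = mat 1" and RSR: "R ** Sig ** R = mat 1"
    and small: "spec_norm (R ** (H - Sig) ** R) < 1"
  shows "invertible H"
    and "norm (Q *v (matrix_inv H *v e)) \<le> 1 / (1 - spec_norm (R ** (H - Sig) ** R)) * norm (R *v e)"
proof -
  define \<Delta> where "\<Delta> = R ** (H - Sig) ** R"
  have RQv: "R *v (Q *v y) = y" for y using RQ by (simp add: matrix_vector_mul_assoc)
  have RHR: "R *v (H *v (R *v v)) = v + \<Delta> *v v" for v
  proof -
    have "R *v (Sig *v (R *v v)) = v"
      using RSR by (simp add: matrix_vector_mul_assoc matrix_mul_assoc)
    then show ?thesis
      by (simp add: \<Delta>_def matrix_vector_mul_assoc[symmetric] matrix_vector_mult_diff_rdistrib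
          matrix_vector_mult_diff_distrib)
  qed
  have lower: "(1 - spec_norm \<Delta>) * norm v \<le> norm (R *v (H *v (R *v v)))" for v
  proof -
    have "norm (\<Delta> *v v) \<le> spec_norm \<Delta> * norm v"
      unfolding spec_norm_def by (rule onorm) simp
    moreover have "norm v - norm (\<Delta> *v v) \<le> norm (v + \<Delta> *v v)" by (rule norm_diff_ineq)
    ultimately show ?thesis by (simp add: RHR algebra_simps)
  qed
  have "y = 0" if "H *v y = 0" for y
  proof -
    have "(1 - spec_norm \<Delta>) * norm (Q *v y) \<le> 0"
      using lower[of "Q *v y"] that by (simp add: RQv)
    then have "Q *v y = 0" using small by (simp add: \<Delta>_def mult_le_0_iff)
    then show "y = 0" by (metis RQv matrix_vector_mult_0_right)
  qed
  then show inv: "invertible H"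
    by (simp add: invertible_left_inverse matrix_left_invertible_ker)
  have "H *v (matrix_inv H *v e) = e"
    using matrix_inv_invertible(1)[OF inv] by (simp add: matrix_vector_mul_assoc)
  then have "R *v (H *v (R *v (Q *v (matrix_inv H *v e)))) = R *v e" by (simp add: RQv)
  then have "(1 - spec_norm \<Delta>) * norm (Q *v (matrix_inv H *v e)) \<le> norm (R *v e)"
    using lower by metis
  then show "norm (Q *v (matrix_inv H *v e)) \<le> 1 / (1 - spec_norm (R ** (H - Sig) ** R)) * norm (R *v e)"
    using small by (simp add: \<Delta>_def field_simps)
qed

section \<open>Weighted least squares\<close>

lemma measurable_fst_snd_sets_borel:
  fixes P :: "('a::topological_space \<times> 'b::topological_space) measure"
  assumes "sets P = sets borel"
  shows "fst \<in> borel_measurable P" "snd \<in> borel_measurable P"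
proof -
  have "measurable P borel = measurable borel borel" by (rule measurable_cong_sets[OF assms refl])
  moreover have "fst \<in> borel_measurable borel" "snd \<in> borel_measurable borel"
    by (intro borel_measurable_continuous_onI continuous_on_fst continuous_on_snd continuous_on_id)+
  ultimately show "fst \<in> borel_measurable P" "snd \<in> borel_measurable P" by auto
qed

lemma is_cond_exp_X_integral_simple:
  fixes P :: "((real^'d) \<times> real) measure" and s :: "real^'d \<Rightarrow> real"
  assumes P: "sets P = sets borel" and CE: "is_cond_exp_X P m" and s: "simple_function borel s"
  shows "(LINT z|P. s (fst z) * snd z) = (LINT z|P. s (fst z) * m (fst z))"
proof -
  note [measurable] = measurable_fst_snd_sets_borel[OF P]
  have [measurable]: "m \<in> borel_measurable borel" and int: "integrable P snd" "integrable P (\<lambda>z. m (fst z))"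
    and CE_set: "\<And>A. A \<in> sets borel \<Longrightarrow>
      (LINT z|P. indicator A (fst z) * snd z) = (LINT z|P. indicator A (fst z) * m (fst z))"
    using CE unfolding is_cond_exp_X_def by blast+
  have int_indicator: "integrable P (\<lambda>z. indicator A (fst z) * f z)"
    if "A \<in> sets borel" "integrable P f" for A and f :: "(real^'d) \<times> real \<Rightarrow> real"
  proof (rule Bochner_Integration.integrable_bound[OF \<open>integrable P f\<close>])
    have [measurable]: "f \<in> borel_measurable P" using that(2) by (rule borel_measurable_integrable)
    show "(\<lambda>z. indicator A (fst z) * f z) \<in> borel_measurable P" using that(1) by measurable
    show "AE z in P. norm (indicator A (fst z) * f z) \<le> norm (f z)"
      by (intro AE_I2) (simp add: indicator_def)
  qed
  have A: "s -` {y} \<in> sets borel" for y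
    using simple_functionD(2)[OF s, of "{y}"] by simp
  have s_eq: "s x = (\<Sum>y\<in>s ` UNIV. y * indicator (s -` {y}) x)" for x
  proof -
    have "s x = (\<Sum>y\<in>s ` space borel. indicator (s -` {y} \<inter> space borel) x *\<^sub>R y)"
      by (rule simple_function_indicator_representation_banach[OF s]) simp
    then show ?thesis by (simp only: space_borel Int_UNIV_right real_scaleR_def mult.commute)
  qed
  have expand: "(LINT z|P. s (fst z) * f z) = (\<Sum>y\<in>s ` UNIV. y * (LINT z|P. indicator (s -` {y}) (fst z) * f z))"
    if "integrable P f" for f
  proof -
    have "(LINT z|P. s (fst z) * f z) = (LINT z|P. (\<Sum>y\<in>s ` UNIV. y * (indicator (s -` {y}) (fst z) * f z)))"
      by (rule Bochner_Integration.integral_cong[OF refl]) (simp only: s_eq[of "fst _"] sum_distrib_right mult.assoc)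
    also have "\<dots> = (\<Sum>y\<in>s ` UNIV. y * (LINT z|P. indicator (s -` {y}) (fst z) * f z))"
      using int_indicator[OF A that] by (simp add: Bochner_Integration.integral_sum)
    finally show ?thesis .
  qed
  have "(LINT z|P. s (fst z) * snd z) = (\<Sum>y\<in>s ` UNIV. y * (LINT z|P. indicator (s -` {y}) (fst z) * snd z))"
    by (rule expand[OF int(1)])
  also have "\<dots> = (\<Sum>y\<in>s ` UNIV. y * (LINT z|P. indicator (s -` {y}) (fst z) * m (fst z)))"
    using CE_set[OF A] by simp
  also have "\<dots> = (LINT z|P. s (fst z) * m (fst z))"
    by (rule expand[OF int(2), symmetric])
  finally show ?thesis .
qed

lemma is_cond_exp_X_integral_mult:
  fixes P :: "((real^'d) \<times> real) measure" and g :: "real^'d \<Rightarrow> real"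
  assumes P: "sets P = sets borel" and CE: "is_cond_exp_X P m"
    and [measurable]: "g \<in> borel_measurable borel"
    and int_Y: "integrable P (\<lambda>z. g (fst z) * snd z)" and int_m: "integrable P (\<lambda>z. g (fst z) * m (fst z))"
  shows "(LINT z|P. g (fst z) * snd z) = (LINT z|P. g (fst z) * m (fst z))"
proof -
  note [measurable] = measurable_fst_snd_sets_borel[OF P]
  have [measurable]: "m \<in> borel_measurable borel" using CE by (simp add: is_cond_exp_X_def)
  obtain F where F: "\<And>i. simple_function borel (F i)" "\<And>x. (\<lambda>i. F i x) \<longlonglongrightarrow> g x"
      "\<And>i x. \<bar>F i x\<bar> \<le> 2 * \<bar>g x\<bar>"
    using borel_measurable_implies_sequence_metric[of g borel 0] by (auto simp: dist_real_def)
  have [measurable]: "F i \<in> borel_measurable borel" for i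
    using F(1) by (rule borel_measurable_simple_function)
  have approx: "(\<lambda>i. LINT z|P. F i (fst z) * f z) \<longlonglongrightarrow> (LINT z|P. g (fst z) * f z)"
    if [measurable]: "f \<in> borel_measurable P" and int: "integrable P (\<lambda>z. g (fst z) * f z)" for f
  proof (rule integral_dominated_convergence[where w="\<lambda>z. 2 * norm (g (fst z) * f z)"])
    show "AE z in P. norm (F i (fst z) * f z) \<le> 2 * norm (g (fst z) * f z)" for i
    proof (intro AE_I2)
      fix z
      have "\<bar>F i (fst z)\<bar> * \<bar>f z\<bar> \<le> 2 * \<bar>g (fst z)\<bar> * \<bar>f z\<bar>"
        using F(3) by (intro mult_right_mono) auto
      then show "norm (F i (fst z) * f z) \<le> 2 * norm (g (fst z) * f z)" by (simp add: abs_mult)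
    qed
  qed (use int F(2) in \<open>auto intro!: AE_I2 tendsto_intros\<close>)
  have "(\<lambda>i. LINT z|P. F i (fst z) * snd z) \<longlonglongrightarrow> (LINT z|P. g (fst z) * snd z)"
    using int_Y by (intro approx) auto
  moreover have "(\<lambda>i. LINT z|P. F i (fst z) * snd z) \<longlonglongrightarrow> (LINT z|P. g (fst z) * m (fst z))"
    using int_m approx[of "\<lambda>z. m (fst z)"] by (simp add: is_cond_exp_X_integral_simple[OF P CE F(1)])
  ultimately show ?thesis by (rule LIMSEQ_unique)
qed

lemma is_cond_exp_X_integral_scaleR:
  fixes P :: "((real^'d) \<times> real) measure" and g :: "real^'d \<Rightarrow> real"
  assumes P: "sets P = sets borel" and CE: "is_cond_exp_X P m"
    and [measurable]: "g \<in> borel_measurable borel"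
    and int_m: "integrable P (\<lambda>z. (g (fst z) * m (fst z)) *\<^sub>R fst z)"
    and int_Y: "integrable P (\<lambda>z. (g (fst z) * snd z) *\<^sub>R fst z)"
  shows "(LINT z|P. (g (fst z) * m (fst z)) *\<^sub>R fst z) = (LINT z|P. (g (fst z) * snd z) *\<^sub>R fst z)"
proof (rule euclidean_eqI)
  fix v :: "real^'d"
  define h where "h x = g x * (x \<bullet> v)" for x
  have h[measurable]: "h \<in> borel_measurable borel"
    unfolding h_def by (intro borel_measurable_times borel_measurable_inner) measurable
  have component: "((g (fst z) * c) *\<^sub>R fst z) \<bullet> v = h (fst z) * c" for z c
    by (simp add: h_def)
  have "(LINT z|P. (g (fst z) * m (fst z)) *\<^sub>R fst z) \<bullet> v = (LINT z|P. h (fst z) * m (fst z))"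
    using int_m by (simp only: integral_inner_left[symmetric] component)
  also have "\<dots> = (LINT z|P. h (fst z) * snd z)"
    using integrable_inner_left[OF int_m, of v] integrable_inner_left[OF int_Y, of v]
    by (intro is_cond_exp_X_integral_mult[OF P CE h, symmetric]) (simp_all only: component)
  also have "\<dots> = (LINT z|P. (g (fst z) * snd z) *\<^sub>R fst z) \<bullet> v"
    using int_Y by (simp only: integral_inner_left[symmetric] component)
  finally show "(LINT z|P. (g (fst z) * m (fst z)) *\<^sub>R fst z) \<bullet> v
      = (LINT z|P. (g (fst z) * snd z) *\<^sub>R fst z) \<bullet> v" .
qed

lemma emp_add: "emp n S (\<lambda>z. f z + g z) = emp n S f + emp n S g"
  by (simp add: emp_def sum.distrib scaleR_add_right)

lemma emp_matrix_vector_mult: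
  fixes F :: "(real^'d) \<times> real \<Rightarrow> real^'n^'m"
  shows "emp n S F *v v = emp n S (\<lambda>z. F z *v v)"
proof -
  have "(\<Sum>i<k. F (S i)) *v v = (\<Sum>i<k. F (S i) *v v)" for k
    by (induction k) (simp_all add: matrix_vector_mult_add_rdistrib)
  then show ?thesis by (simp only: emp_def scaleR_matrix_vector_assoc[symmetric])
qed

lemma outer_mult: "outer x *v v = (x \<bullet> v) *\<^sub>R x"
  by (simp add: outer_def matrix_vector_mult_def inner_vec_def vec_eq_iff sum_distrib_left algebra_simps)

lemma beta_bar_error_bound:
  fixes P :: "((real^'d) \<times> real) measure"
  assumes pd: "posdef (Sigma_w P w)"
    and small: "spec_norm (mat_inv_sqrt (Sigma_w P w) ** (Sigma_hat n S w - Sigma_w P w)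
                  ** mat_inv_sqrt (Sigma_w P w)) < 1"
  shows "anorm (Sigma_w P w) (beta_bar n S w m - beta_w P w)
    \<le> 1 / (1 - spec_norm (mat_inv_sqrt (Sigma_w P w) ** (Sigma_hat n S w - Sigma_w P w)
                            ** mat_inv_sqrt (Sigma_w P w)))
      * anorm (matrix_inv (Sigma_w P w)) (emp n S (\<lambda>z. (w (fst z) * approx_w P w m (fst z)) *\<^sub>R fst z))"
proof -
  let ?\<Sigma> = "Sigma_w P w" and ?H = "Sigma_hat n S w" and ?\<beta> = "beta_w P w"
  let ?e = "emp n S (\<lambda>z. (w (fst z) * approx_w P w m (fst z)) *\<^sub>R fst z)"
  define Q where "Q = mat_sqrt ?\<Sigma>"
  define R where "R = mat_inv_sqrt ?\<Sigma>"
  note Q = posdef_mat_sqrt[OF pd, folded Q_def]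
  note R = mat_inv_sqrt_whitening[OF pd, folded Q_def R_def]
  note bound = perturbed_inverse_bound[OF R(1,2) small[folded R_def]]
  have "?H *v ?\<beta> = emp n S (\<lambda>z. (w (fst z) * (?\<beta> \<bullet> fst z)) *\<^sub>R fst z)"
    by (simp add: Sigma_hat_def emp_matrix_vector_mult outer_mult scaleR_matrix_vector_assoc[symmetric]
        inner_commute)
  then have "emp n S (\<lambda>z. (w (fst z) * m (fst z)) *\<^sub>R fst z) = ?e + ?H *v ?\<beta>"
    by (simp add: emp_add[symmetric] approx_w_def algebra_simps)
  then have "beta_bar n S w m - ?\<beta> = matrix_inv ?H *v ?e"
    using matrix_inv_invertible(2)[OF bound(1)]
    by (simp add: beta_bar_def matrix_vector_right_distrib matrix_vector_mul_assoc)
  moreover have "anorm ?\<Sigma> v = norm (Q *v v)" for v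
    using anorm_square[of Q v] Q by (simp add: posdef_def)
  moreover have "anorm (matrix_inv ?\<Sigma>) v = norm (R *v v)" for v
    using anorm_square[OF R(4), of v] by (simp add: R(3))
  ultimately show ?thesis using bound(2) by (simp add: R_def)
qed

text \<open>\<open>\<beta>_w\<close> solves the population normal equations, in which \<open>Y\<close> may be replaced by
  \<open>m = E[Y | X]\<close>.\<close>

lemma integral_weighted_approx_error:
  fixes P :: "((real^'d) \<times> real) measure"
  assumes P: "sets P = sets borel" and W: "in_W P w" and CE: "is_cond_exp_X P m"
    and int_Sigma: "integrable P (\<lambda>z. w (fst z) *\<^sub>R outer (fst z))"
    and int_XY: "integrable P (\<lambda>z. (w (fst z) * snd z) *\<^sub>R fst z)"
    and pd: "posdef (Sigma_w P w)"
    and int: "integrable P (\<lambda>z. (w (fst z) * approx_w P w m (fst z)) *\<^sub>R fst z)"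
  shows "(LINT z|P. (w (fst z) * approx_w P w m (fst z)) *\<^sub>R fst z) = 0"
proof -
  let ?\<Sigma> = "Sigma_w P w" and ?\<beta> = "beta_w P w"
  have bl: "bounded_linear (\<lambda>A::real^'d^'d. A *v ?\<beta>)"
    by (auto simp: linear_conv_bounded_linear[symmetric] linear_iff matrix_vector_mult_add_rdistrib
        scaleR_matrix_vector_assoc)
  have lin: "(\<lambda>z. (w (fst z) * (?\<beta> \<bullet> fst z)) *\<^sub>R fst z) = (\<lambda>z. (w (fst z) *\<^sub>R outer (fst z)) *v ?\<beta>)"
    by (simp add: outer_mult scaleR_matrix_vector_assoc[symmetric] inner_commute)
  have int_lin: "integrable P (\<lambda>z. (w (fst z) * (?\<beta> \<bullet> fst z)) *\<^sub>R fst z)"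
    unfolding lin by (rule integrable_bounded_linear[OF bl int_Sigma])
  have m_eq: "(\<lambda>z. (w (fst z) * m (fst z)) *\<^sub>R fst z)
      = (\<lambda>z. (w (fst z) * approx_w P w m (fst z)) *\<^sub>R fst z + (w (fst z) * (?\<beta> \<bullet> fst z)) *\<^sub>R fst z)"
    by (simp add: fun_eq_iff approx_w_def algebra_simps)
  have int_m: "integrable P (\<lambda>z. (w (fst z) * m (fst z)) *\<^sub>R fst z)"
    unfolding m_eq by (intro Bochner_Integration.integrable_add int int_lin)
  have "(LINT z|P. (w (fst z) * m (fst z)) *\<^sub>R fst z) = (LINT z|P. (w (fst z) * snd z) *\<^sub>R fst z)"
    using W int_m int_XY by (intro is_cond_exp_X_integral_scaleR[OF P CE]) (simp_all add: in_W_def)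
  also have "\<dots> = ?\<Sigma> *v ?\<beta>"
    using matrix_inv_invertible(1)[OF posdef_invertible[OF pd]]
    by (simp add: beta_w_def matrix_vector_mul_assoc)
  also have "\<dots> = (LINT z|P. (w (fst z) * (?\<beta> \<bullet> fst z)) *\<^sub>R fst z)"
    unfolding lin Sigma_w_def by (rule integral_bounded_linear[OF bl int_Sigma, symmetric])
  moreover have "(LINT z|P. (w (fst z) * m (fst z)) *\<^sub>R fst z)
      = (LINT z|P. (w (fst z) * approx_w P w m (fst z)) *\<^sub>R fst z)
        + (LINT z|P. (w (fst z) * (?\<beta> \<bullet> fst z)) *\<^sub>R fst z)"
    unfolding m_eq by (rule Bochner_Integration.integral_add[OF int int_lin])
  ultimately show ?thesis by simp
qed

lemma integral_whitened_weighted_sq_le: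
  fixes P :: "((real^'d) \<times> real) measure" and R :: "real^'d^'d" and w a :: "real^'d \<Rightarrow> real"
  assumes w: "\<And>x. 0 \<le> w x"
    and C1: "AE z in P. sqrt (w (fst z)) * norm (R *v fst z) / sqrt (real CARD('d)) \<le> rho"
    and int: "integrable P (\<lambda>z. w (fst z) * (a (fst z))\<^sup>2)"
  shows "(LINT z|P. (norm (R *v ((w (fst z) * a (fst z)) *\<^sub>R fst z)))\<^sup>2)
    \<le> rho\<^sup>2 * real CARD('d) * (LINT z|P. w (fst z) * (a (fst z))\<^sup>2)"
proof -
  have "(LINT z|P. (norm (R *v ((w (fst z) * a (fst z)) *\<^sub>R fst z)))\<^sup>2)
      \<le> (LINT z|P. rho\<^sup>2 * real CARD('d) * (w (fst z) * (a (fst z))\<^sup>2))"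
  proof (rule integral_mono_AE')
    show "AE z in P. (norm (R *v ((w (fst z) * a (fst z)) *\<^sub>R fst z)))\<^sup>2
        \<le> rho\<^sup>2 * real CARD('d) * (w (fst z) * (a (fst z))\<^sup>2)"
      using C1
    proof eventually_elim
      case (elim z)
      let ?x = "fst z"
      have "sqrt (w ?x) * norm (R *v ?x) \<le> rho * sqrt CARD('d)"
        using elim by (simp add: divide_le_eq)
      then have "(sqrt (w ?x) * norm (R *v ?x))\<^sup>2 \<le> (rho * sqrt CARD('d))\<^sup>2"
        by (intro power_mono) (auto simp: w)
      then have "w ?x * (norm (R *v ?x))\<^sup>2 \<le> rho\<^sup>2 * CARD('d)"
        using w by (simp add: power_mult_distrib)
      then have "(w ?x * (a ?x)\<^sup>2) * (w ?x * (norm (R *v ?x))\<^sup>2) \<le> (w ?x * (a ?x)\<^sup>2) * (rho\<^sup>2 * CARD('d))"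
        using w by (intro mult_left_mono) auto
      then show ?case
        by (simp add: matrix_vector_mult_scaleR power_mult_distrib power2_eq_square algebra_simps)
    qed
  qed (use int w in auto)
  then show ?thesis by simp
qed

lemma whitened_weighted_approx_error:
  fixes P :: "((real^'d) \<times> real) measure"
  assumes P: "prob_space P" "sets P = sets borel" and W: "in_W P w" and CE: "is_cond_exp_X P m"
    and int_Sigma: "integrable P (\<lambda>z. w (fst z) *\<^sub>R outer (fst z))"
    and int_XY: "integrable P (\<lambda>z. (w (fst z) * snd z) *\<^sub>R fst z)"
    and pd: "posdef (Sigma_w P w)"
    and C2: "AE z in P. w (fst z) * norm (mat_inv_sqrt (Sigma_w P w) *v
               (approx_w P w m (fst z) *\<^sub>R fst z)) / sqrt (real CARD('d)) \<le> b"
  defines "Z \<equiv> \<lambda>z :: (real^'d) \<times> real. mat_inv_sqrt (Sigma_w P w) *v ((w (fst z) * approx_w P w m (fst z)) *\<^sub>R fst z)"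
  shows "Z \<in> borel_measurable P" "AE z in P. norm (Z z) \<le> b * sqrt CARD('d)" "integral\<^sup>L P Z = 0"
proof -
  interpret P: prob_space P by (rule P(1))
  define h where "h = (\<lambda>z :: (real^'d) \<times> real. (w (fst z) * approx_w P w m (fst z)) *\<^sub>R fst z)"
  define Q where "Q = mat_sqrt (Sigma_w P w)"
  define R where "R = mat_inv_sqrt (Sigma_w P w)"
  note R = mat_inv_sqrt_whitening[OF pd, folded Q_def R_def]
  note [measurable] = measurable_fst_snd_sets_borel[OF P(2)]
  have [measurable]: "w \<in> borel_measurable borel" using W by (simp add: in_W_def)
  have [measurable]: "m \<in> borel_measurable borel" using CE by (simp add: is_cond_exp_X_def)
  have [measurable]: "(*v) A \<in> borel_measurable borel" for A :: "real^'d^'d"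
    by (intro borel_measurable_continuous_onI linear_continuous_on matrix_vector_mul_bounded_linear)
  show measurable_Z[measurable]: "Z \<in> borel_measurable P"
    unfolding Z_def approx_w_def by measurable
  show bounded: "AE z in P. norm (Z z) \<le> b * sqrt CARD('d)"
    using C2
  proof eventually_elim
    case (elim z)
    have "norm (Z z) = w (fst z) * norm (R *v (approx_w P w m (fst z) *\<^sub>R fst z))"
      using W by (simp add: Z_def R_def in_W_def matrix_vector_mult_scaleR flip: scaleR_scaleR)
    then show ?case using elim by (simp add: R_def divide_le_eq)
  qed
  have int_Z: "integrable P Z"
    using bounded by (intro P.integrable_const_bound) measurable
  have h_Q: "h = (\<lambda>z. Q *v Z z)"
    using R(1) matrix_left_right_inverse[of R Q]
    by (simp add: Z_def h_def R_def matrix_vector_mul_assoc)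
  have int_h: "integrable P h"
    unfolding h_Q by (rule integrable_bounded_linear[OF matrix_vector_mul_bounded_linear int_Z])
  then have "integral\<^sup>L P h = 0"
    unfolding h_def by (rule integral_weighted_approx_error[OF P(2) W CE int_Sigma int_XY pd])
  with int_h show "integral\<^sup>L P Z = 0"
    using integral_bounded_linear[OF matrix_vector_mul_bounded_linear, of P h R]
    by (simp add: Z_def h_def R_def)
qed

lemma weighted_approx_error_tail:
  fixes P :: "((real^'d) \<times> real) measure" and n :: nat
  assumes P: "prob_space P" "sets P = sets borel" and W: "in_W P w" and CE: "is_cond_exp_X P m"
    and int_Sigma: "integrable P (\<lambda>z. w (fst z) *\<^sub>R outer (fst z))"
    and int_XY: "integrable P (\<lambda>z. (w (fst z) * snd z) *\<^sub>R fst z)"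
    and pd: "posdef (Sigma_w P w)"
    and b: "b \<ge> 0"
    and C2: "AE z in P. w (fst z) * norm (mat_inv_sqrt (Sigma_w P w) *v
               (approx_w P w m (fst z) *\<^sub>R fst z)) / sqrt (real CARD('d)) \<le> b"
    and n: "n > 0" and t: "t > 0"
  shows "measure (PiM {..<n} (\<lambda>_. P))
      {S \<in> space (PiM {..<n} (\<lambda>_. P)).
        anorm (matrix_inv (Sigma_w P w)) (emp n S (\<lambda>z. (w (fst z) * approx_w P w m (fst z)) *\<^sub>R fst z))
        \<le> sqrt ((LINT z|P. (norm (mat_inv_sqrt (Sigma_w P w) *v
                    ((w (fst z) * approx_w P w m (fst z)) *\<^sub>R fst z)))\<^sup>2) / real n)
            * (1 + sqrt (8 * t))
          + 4 * b * t * sqrt (real CARD('d)) / (3 * real n)}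
    \<ge> 1 - exp (- t)"
proof -
  interpret P: prob_space P by (rule P(1))
  define R where "R = mat_inv_sqrt (Sigma_w P w)"
  define Z where "Z = (\<lambda>z :: (real^'d) \<times> real. R *v ((w (fst z) * approx_w P w m (fst z)) *\<^sub>R fst z))"
  note Z = whitened_weighted_approx_error[OF P W CE int_Sigma int_XY pd C2, folded R_def Z_def]
  have "0 \<le> b * sqrt CARD('d)" using b by simp
  note tail = P.vector_Bernstein[OF Z(1,2) this Z(3) n t]
  have "4 * (b * sqrt CARD('d)) * t / (3 * real n) = 4 * b * t * sqrt CARD('d) / (3 * real n)"
    by simp
  note tail = tail[unfolded this]
  have "anorm (matrix_inv (Sigma_w P w)) (emp n S (\<lambda>z. (w (fst z) * approx_w P w m (fst z)) *\<^sub>R fst z))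
      = norm ((1 / real n) *\<^sub>R (\<Sum>j<n. Z (S j)))" for S
    using mat_inv_sqrt_whitening(3,4)[OF pd, folded R_def]
    by (simp add: anorm_square Z_def emp_def matrix_vector_mult_scaleR
        linear_sum[OF matrix_vector_mul_linear])
  then show ?thesis
    using tail by (simp only: Z_def R_def)
qed

theorem proposition8:
  fixes P :: "((real^'d) \<times> real) measure"
    and w m :: "real^'d \<Rightarrow> real"
    and n :: nat and rho b t :: real
  assumes P: "prob_space P" "sets P = sets borel"
    and W: "in_W P w"
    and CE: "is_cond_exp_X P m"
    and int_Sigma: "integrable P (\<lambda>z. w (fst z) *\<^sub>R outer (fst z))"
    and int_XY: "integrable P (\<lambda>z. (w (fst z) * snd z) *\<^sub>R fst z)"
    and pd: "posdef (Sigma_w P w)"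
    and rho: "rho \<ge> 1"
    and C1: "AE z in P. sqrt (w (fst z)) * norm (mat_inv_sqrt (Sigma_w P w) *v fst z)
                          / sqrt (real CARD('d)) \<le> rho"
    and b: "b \<ge> 0"
    and C2: "AE z in P. w (fst z) * norm (mat_inv_sqrt (Sigma_w P w) *v
                          (approx_w P w m (fst z) *\<^sub>R fst z)) / sqrt (real CARD('d)) \<le> b"
    and n: "n > 0"
    and t: "t > 0"
  shows
    "(\<forall>S. let \<Delta> = mat_inv_sqrt (Sigma_w P w) ** (Sigma_hat n S w - Sigma_w P w)
                    ** mat_inv_sqrt (Sigma_w P w)
          in spec_norm \<Delta> < 1 \<longrightarrow>
             anorm (Sigma_w P w) (beta_bar n S w m - beta_w P w)
               \<le> 1 / (1 - spec_norm \<Delta>) *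
                 anorm (matrix_inv (Sigma_w P w))
                   (emp n S (\<lambda>z. (w (fst z) * approx_w P w m (fst z)) *\<^sub>R fst z)))
     \<and> measure (PiM {..<n} (\<lambda>_. P))
         {S \<in> space (PiM {..<n} (\<lambda>_. P)).
            anorm (matrix_inv (Sigma_w P w))
              (emp n S (\<lambda>z. (w (fst z) * approx_w P w m (fst z)) *\<^sub>R fst z))
            \<le> sqrt ((LINT z|P. (norm (mat_inv_sqrt (Sigma_w P w) *v
                        ((w (fst z) * approx_w P w m (fst z)) *\<^sub>R fst z)))\<^sup>2) / real n)
                * (1 + sqrt (8 * t))
              + 4 * b * t * sqrt (real CARD('d)) / (3 * real n)}
       \<ge> 1 - exp (- t)
     \<and> (integrable P (\<lambda>z. w (fst z) * (approx_w P w m (fst z))\<^sup>2) \<longrightarrow>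
         sqrt ((LINT z|P. (norm (mat_inv_sqrt (Sigma_w P w) *v
                    ((w (fst z) * approx_w P w m (fst z)) *\<^sub>R fst z)))\<^sup>2) / real n)
            * (1 + sqrt (8 * t))
          + 4 * b * t * sqrt (real CARD('d)) / (3 * real n)
         \<le> sqrt (rho\<^sup>2 * real CARD('d) * (LINT z|P. w (fst z) * (approx_w P w m (fst z))\<^sup>2) / real n)
            * (1 + sqrt (8 * t))
          + 4 * b * t * sqrt (real CARD('d)) / (3 * real n))"
proof -
  have w: "\<And>x. 0 \<le> w x" using W by (simp add: in_W_def)
  have sqrt_mono: "sqrt (a / n) * (1 + sqrt (8 * t)) + c \<le> sqrt (a' / n) * (1 + sqrt (8 * t)) + c"
    if "a \<le> a'" for a a' c :: real
    using that n t by (intro add_right_mono mult_right_mono real_sqrt_le_mono divide_right_mono) auto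
  show ?thesis
    unfolding Let_def
    apply (intro conjI allI impI)
    subgoal by (rule beta_bar_error_bound[OF pd])
    subgoal by (rule weighted_approx_error_tail[OF P W CE int_Sigma int_XY pd b C2 n t])
    subgoal by (rule sqrt_mono[OF integral_whitened_weighted_sq_le[OF w C1]])
    done
qed

end
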